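(* In the single-item all-pay auction with budgets described in the context, in a Nash equilibrium $(F_1,F_2)$, if $\underline{x}_1<\overline{x}_1$ and $\underline{x}_2<\overline{x}_2$, then $\underline{x}_1=\underline{x}_2=0$.
   Context: Single-item all-pay auction with budgets. There are two players $i\in\{1,2\}$; $-i$ denotes the opponent of $i$. Player $i$ has budget $B_i\ge 0$ and valuation $v_i>0$ for a single item. A pure strategy of player $i$ is a bid $x_i\in[0,B_i]$; a mixed strategy is a probability distribution on $[0,B_i]$, described by its cumulative distribution function $F_i$. The player with the higher bid wins the item. Tie-breaking: if $x_1=x_2=\min\{B_1,B_2,v_1,v_2\}$ and $\min\{B_i,v_i\}>\min\{B_{-i},v_{-i}\}$ for some $i$, then player $i$ wins; in all other ties each player wins with probability $\frac12$. Player $i$'s utility is $v_i-x_i$ if he wins and $-x_i$ if he loses. A Nash equilibrium is a pair $(F_1,F_2)$ such that each $F_i$ maximizes player $i$'s expected utility against $F_{-i}$ over all mixed strategies on $[0,B_i]$. $Supp(F_i)$ is the support of $F_i$, $\overline{x}_i=\sup Supp(F_i)$ and $\underline{x}_i=\inf Supp(F_i)$. *)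

theory Defs
  imports "HOL-Probability.Probability"
begin

definition win_prob :: "real \<Rightarrow> real \<Rightarrow> real \<Rightarrow> real \<Rightarrow> real \<Rightarrow> real \<Rightarrow> real" where
  "win_prob Bm vm Bo vo x y =
     (if x > y then 1
      else if x < y then 0
      else if x = min (min Bm Bo) (min vm vo) \<and> min Bm vm > min Bo vo then 1
      else if x = min (min Bm Bo) (min vm vo) \<and> min Bo vo > min Bm vm then 0
      else 1/2)"

definition util :: "real \<Rightarrow> real \<Rightarrow> real \<Rightarrow> real \<Rightarrow> real \<Rightarrow> real \<Rightarrow> real" where
  "util Bm vm Bo vo x y = vm * win_prob Bm vm Bo vo x y - x"

definition mixed_strategies :: "real \<Rightarrow> real measure set" where
  "mixed_strategies B = {M. prob_space M \<and> sets M = sets borel \<and> emeasure M {0..B} = 1}"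

definition exp_util :: "real \<Rightarrow> real \<Rightarrow> real \<Rightarrow> real \<Rightarrow> real measure \<Rightarrow> real measure \<Rightarrow> real" where
  "exp_util Bm vm Bo vo Mm Mo =
     (\<integral>z. util Bm vm Bo vo (fst z) (snd z) \<partial>(Mm \<Otimes>\<^sub>M Mo))"

definition nash_eq :: "real \<Rightarrow> real \<Rightarrow> real \<Rightarrow> real \<Rightarrow> real measure \<Rightarrow> real measure \<Rightarrow> bool" where
  "nash_eq B1 v1 B2 v2 M1 M2 \<longleftrightarrow>
     M1 \<in> mixed_strategies B1 \<and> M2 \<in> mixed_strategies B2 \<and>
     (\<forall>M \<in> mixed_strategies B1. exp_util B1 v1 B2 v2 M M2 \<le> exp_util B1 v1 B2 v2 M1 M2) \<and>
     (\<forall>M \<in> mixed_strategies B2. exp_util B2 v2 B1 v1 M M1 \<le> exp_util B2 v2 B1 v1 M2 M1)"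

definition supp :: "real measure \<Rightarrow> real set" where
  "supp M = {x. \<forall>e>0. emeasure M (ball x e) > 0}"

definition supp_low :: "real measure \<Rightarrow> real" where
  "supp_low M = Inf (supp M)"

definition supp_up :: "real measure \<Rightarrow> real" where
  "supp_up M = Sup (supp M)"

end

theory Submission
  imports Defs
begin

(* Let a_i be the lower end of the support of F_i, u_i x the expected utility of the pure bid x
   against F_(-i) and U_i the equilibrium payoff: u_i x <= U_i for every bid x in [0, B_i],
   U_i >= 0, and F_i-almost every bid attains U_i.
   If a_1 < a_2, every bid in (0, a_2) surely loses, so F_1 puts no mass there and a_1 = 0.
   Player 2 then secures more than v_2 F_1(<a_2) - a_2, which is only compatible with bids just
   above a_2 if F_1 has an atom at a_2. Player 1 gains from that atom only if F_2 has an atom at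
   a_2 as well and player 1 wins the tie there with positive probability; but then player 2 loses
   the tie with positive probability and prefers to bid slightly above a_2.
   If a_1 = a_2 = a > 0, the same reasoning gives atoms of both F_1 and F_2 at a, and the player
   who does not surely win the tie at a prefers to bid slightly above a. *)

lemma win_prob_measurable:
  "(\<lambda>z. win_prob Bm vm Bo vo (fst z) (snd z)) \<in> borel_measurable (borel \<Otimes>\<^sub>M borel)"
  unfolding win_prob_def by measurable

lemma util_measurable:
  "(\<lambda>z. util Bm vm Bo vo (fst z) (snd z)) \<in> borel_measurable (borel \<Otimes>\<^sub>M borel)"
  unfolding util_def using win_prob_measurable by measurable

lemma win_prob_nonneg: "0 \<le> win_prob Bm vm Bo vo x y"
  and win_prob_le_1: "win_prob Bm vm Bo vo x y \<le> 1"
  unfolding win_prob_def by auto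

lemma win_prob_tie_sum: "win_prob Bm vm Bo vo c c + win_prob Bo vo Bm vm c c = 1"
proof -
  have min_sym: "min (min Bo Bm) (min vo vm) = min (min Bm Bo) (min vm vo)"
    by (simp add: min_def)
  show ?thesis
    unfolding win_prob_def min_sym by auto
qed

lemma win_prob_eq_indicator:
  "win_prob Bm vm Bo vo x y = indicator {..<x} y + win_prob Bm vm Bo vo x x * indicator {x} y"
  by (cases "y < x"; cases "y = x") (auto simp: win_prob_def)

lemma abs_util_le: "\<bar>util Bm vm Bo vo x y\<bar> \<le> \<bar>vm\<bar> + \<bar>x\<bar>"
proof -
  have "\<bar>vm * win_prob Bm vm Bo vo x y\<bar> \<le> \<bar>vm\<bar>"
    using win_prob_nonneg win_prob_le_1 by (simp add: abs_mult mult_left_le)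
  then show ?thesis
    unfolding util_def by linarith
qed

lemma (in finite_borel_measure) measure_atMost_eq:
  "measure M {..x} = measure M {..<x} + measure M {x}"
proof -
  have "measure M ({..<x} \<union> {x}) = measure M {..<x} + measure M {x}"
    by (rule finite_measure_Union) auto
  moreover have "{..<x} \<union> {x} = {..x}"
    by auto
  ultimately show ?thesis
    by simp
qed

lemma mixed_strategiesD:
  assumes "M \<in> mixed_strategies B"
  shows "real_distribution M" and "measure M {0..B} = 1" and "measure M (- {0..B}) = 0"
    and "AE x in M. x \<in> {0..B}"
proof -
  show M: "real_distribution M"
    using assms unfolding mixed_strategies_def real_distribution_def real_distribution_axioms_def
    by auto
  interpret real_distribution M
    by (fact M)
  show "measure M {0..B} = 1"
    using assms unfolding mixed_strategies_def by (simp add: emeasure_eq_measure)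
  then show "measure M (- {0..B}) = 0"
    using prob_compl[of "{0..B}"] by (simp add: Compl_eq_Diff_UNIV)
  show "AE x in M. x \<in> {0..B}"
    using \<open>measure M {0..B} = 1\<close> by (intro AE_in_set_eq_1[THEN iffD2]) simp_all
qed

lemma return_in_mixed_strategies: "x \<in> {0..B} \<Longrightarrow> return borel x \<in> mixed_strategies B"
  unfolding mixed_strategies_def by (auto intro!: prob_space_return)

definition bid_util :: "real \<Rightarrow> real \<Rightarrow> real \<Rightarrow> real \<Rightarrow> real measure \<Rightarrow> real \<Rightarrow> real" where
  "bid_util Bm vm Bo vo Mo x = (\<integral>y. util Bm vm Bo vo x y \<partial>Mo)"

lemma bid_util_eq:
  assumes "real_distribution Mo"
  shows "bid_util Bm vm Bo vo Mo x =
    vm * (measure Mo {..<x} + win_prob Bm vm Bo vo x x * measure Mo {x}) - x"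
proof -
  interpret real_distribution Mo
    by (fact assms)
  let ?s = "win_prob Bm vm Bo vo x x"
  have "bid_util Bm vm Bo vo Mo x =
      (\<integral>y. vm * indicator {..<x} y + (vm * ?s) * indicator {x} y - x \<partial>Mo)"
    unfolding bid_util_def util_def by (subst win_prob_eq_indicator) (simp add: algebra_simps)
  also have "\<dots> = vm * measure Mo {..<x} + vm * ?s * measure Mo {x} - x"
    using prob_space by (simp add: integrable_indicator_iff emeasure_eq_measure)
  finally show ?thesis
    by (simp add: algebra_simps)
qed

lemma bid_util_le_cdf:
  assumes "real_distribution Mo" and "0 \<le> vm"
  shows "bid_util Bm vm Bo vo Mo x \<le> vm * cdf Mo x - x"
proof -
  interpret real_distribution Mo
    by (fact assms)
  have "win_prob Bm vm Bo vo x x * measure Mo {x} \<le> measure Mo {x}"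
    by (intro mult_left_le_one_le) (simp_all add: win_prob_nonneg win_prob_le_1)
  then show ?thesis
    using assms(2) by (simp add: bid_util_eq[OF assms(1)] cdf_def2 measure_atMost_eq mult_left_mono)
qed

lemma measure_lessThan_le_bid_util:
  assumes "real_distribution Mo" and "0 \<le> vm"
  shows "vm * measure Mo {..<x} - x \<le> bid_util Bm vm Bo vo Mo x"
proof -
  have "0 \<le> vm * (win_prob Bm vm Bo vo x x * measure Mo {x})"
    using assms(2) win_prob_nonneg by simp
  then show ?thesis
    using assms(1) by (simp add: bid_util_eq distrib_left)
qed

lemma bid_util_measurable:
  assumes "real_distribution Mo"
  shows "bid_util Bm vm Bo vo Mo \<in> borel_measurable borel"
proof -
  interpret real_distribution Mo
    by (fact assms)
  have "sets (borel \<Otimes>\<^sub>M Mo) = sets (borel \<Otimes>\<^sub>M borel)"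
    by (rule sets_pair_measure_cong) simp_all
  then have "(\<lambda>z. util Bm vm Bo vo (fst z) (snd z)) \<in> borel_measurable (borel \<Otimes>\<^sub>M Mo)"
    using util_measurable measurable_cong_sets by blast
  then have "(\<lambda>(x, y). util Bm vm Bo vo x y) \<in> borel_measurable (borel \<Otimes>\<^sub>M Mo)"
    by (simp add: case_prod_beta')
  then show ?thesis
    unfolding bid_util_def[abs_def] by (rule borel_measurable_lebesgue_integral)
qed

lemma
  assumes M: "M \<in> mixed_strategies Bm" and Mo: "Mo \<in> mixed_strategies Bo"
  shows integrable_bid_util: "integrable M (bid_util Bm vm Bo vo Mo)"
    and exp_util_eq_integral_bid_util:
      "exp_util Bm vm Bo vo M Mo = (\<integral>x. bid_util Bm vm Bo vo Mo x \<partial>M)"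
proof -
  interpret P: real_distribution M
    using mixed_strategiesD(1)[OF M] .
  interpret Q: real_distribution Mo
    using mixed_strategiesD(1)[OF Mo] .
  interpret PQ: pair_prob_space M Mo ..
  let ?f = "\<lambda>z. util Bm vm Bo vo (fst z) (snd z)"
  have "sets (M \<Otimes>\<^sub>M Mo) = sets (borel \<Otimes>\<^sub>M borel)"
    by (rule sets_pair_measure_cong) simp_all
  then have meas: "?f \<in> borel_measurable (M \<Otimes>\<^sub>M Mo)"
    using util_measurable measurable_cong_sets by blast
  have "AE z in M \<Otimes>\<^sub>M Mo. fst z \<in> {0..Bm}"
  proof (rule PQ.AE_pair_measure)
    show "{z \<in> space (M \<Otimes>\<^sub>M Mo). fst z \<in> {0..Bm}} \<in> sets (M \<Otimes>\<^sub>M Mo)"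
      by measurable
    show "AE x in M. AE y in Mo. fst (x, y) \<in> {0..Bm}"
      using mixed_strategiesD(4)[OF M] by simp
  qed
  then have "AE z in M \<Otimes>\<^sub>M Mo. norm (?f z) \<le> \<bar>vm\<bar> + Bm"
  proof eventually_elim
    case (elim z)
    then have "\<bar>fst z\<bar> \<le> Bm"
      by auto
    then show ?case
      using abs_util_le[of Bm vm Bo vo "fst z" "snd z"] by simp
  qed
  then have int: "integrable (M \<Otimes>\<^sub>M Mo) ?f"
    using meas by (intro PQ.integrable_const_bound)
  show "integrable M (bid_util Bm vm Bo vo Mo)"
    using PQ.integrable_fst'[OF int] unfolding bid_util_def[abs_def] by simp
  show "exp_util Bm vm Bo vo M Mo = (\<integral>x. bid_util Bm vm Bo vo Mo x \<partial>M)"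
    using PQ.integral_fst'[OF int] unfolding exp_util_def bid_util_def[abs_def] by simp
qed

lemma supp_subset:
  assumes M: "M \<in> mixed_strategies B"
  shows "supp M \<subseteq> {0..B}"
proof
  interpret real_distribution M
    using mixed_strategiesD(1)[OF M] .
  fix x
  assume x: "x \<in> supp M"
  show "x \<in> {0..B}"
  proof (rule ccontr)
    assume nx: "x \<notin> {0..B}"
    define e where "e = (if x < 0 then - x else x - B)"
    have "0 < e" and "ball x e \<subseteq> - {0..B}"
      using nx by (auto simp: e_def dist_real_def)
    then have "measure M (ball x e) = 0"
      using finite_measure_mono[of "ball x e" "- {0..B}"] mixed_strategiesD(3)[OF M]
      by (simp add: measure_le_0_iff)
    with x \<open>0 < e\<close> show False
      unfolding supp_def by (auto simp: emeasure_eq_measure)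
  qed
qed

lemma exists_supp_le:
  assumes M: "M \<in> mixed_strategies B" and t: "0 < cdf M t"
  shows "\<exists>s\<in>supp M. s \<le> t"
proof -
  interpret real_distribution M
    using mixed_strategiesD(1)[OF M] .
  define T where "T = {x. 0 < cdf M x}"
  have "cdf M x = 0" if "x < 0" for x
  proof -
    have "cdf M x \<le> measure M (- {0..B})"
      unfolding cdf_def2 using that by (intro finite_measure_mono) auto
    then show ?thesis
      using mixed_strategiesD(3)[OF M] cdf_nonneg[of x] by linarith
  qed
  then have bdd: "bdd_below T"
    unfolding bdd_below_def T_def by (intro exI[of _ 0]) (force simp: not_less[symmetric])
  have "t \<in> T"
    using t by (simp add: T_def)
  define s where "s = Inf T"
  have "s \<in> supp M"
    unfolding supp_def
  proof (intro CollectI allI impI)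
    fix e :: real
    assume "0 < e"
    obtain x where x: "x \<in> T" "x < s + e/2"
      using cInf_lessD[of T "s + e/2"] \<open>t \<in> T\<close> \<open>0 < e\<close> unfolding s_def by force
    have "s - e/2 \<notin> T"
      using cInf_lower[of "s - e/2" T] bdd \<open>0 < e\<close> unfolding s_def by force
    then have "cdf M (s - e/2) = 0"
      using cdf_nonneg[of "s - e/2"] by (simp add: T_def)
    moreover have "s - e/2 < x"
      using cInf_lower[OF x(1) bdd] \<open>0 < e\<close> unfolding s_def by simp
    ultimately have "0 < measure M {s - e/2<..x}"
      using x(1) cdf_diff_eq[of "s - e/2" x] by (simp add: T_def)
    also have "\<dots> \<le> measure M (ball s e)"
      using x(2) by (intro finite_measure_mono) (auto simp: dist_real_def)
    finally show "0 < emeasure M (ball s e)"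
      by (simp add: emeasure_eq_measure)
  qed
  moreover have "s \<le> t"
    unfolding s_def by (rule cInf_lower[OF \<open>t \<in> T\<close> bdd])
  ultimately show ?thesis
    by blast
qed

lemma supp_nonempty:
  assumes M: "M \<in> mixed_strategies B"
  shows "supp M \<noteq> {}"
proof -
  interpret real_distribution M
    using mixed_strategiesD(1)[OF M] .
  have "measure M {0..B} \<le> cdf M B"
    unfolding cdf_def2 by (intro finite_measure_mono) auto
  then have "0 < cdf M B"
    using mixed_strategiesD(2)[OF M] by simp
  then show ?thesis
    using exists_supp_le[OF M] by blast
qed

lemma bdd_below_supp: "M \<in> mixed_strategies B \<Longrightarrow> bdd_below (supp M)"
  using supp_subset by (meson bdd_below_Icc bdd_below_mono)

lemma supp_low_nonneg: "M \<in> mixed_strategies B \<Longrightarrow> 0 \<le> supp_low M"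
  unfolding supp_low_def using supp_nonempty supp_subset by (metis atLeastAtMost_iff cInf_greatest subsetD)

lemma supp_low_less_budget:
  assumes M: "M \<in> mixed_strategies B" and "supp_low M < supp_up M"
  shows "supp_low M < B"
proof -
  have "supp_up M \<le> B"
    unfolding supp_up_def using supp_nonempty[OF M] supp_subset[OF M] by (intro cSup_least) auto
  then show ?thesis
    using assms(2) by simp
qed

lemma measure_below_supp_low:
  assumes M: "M \<in> mixed_strategies B"
  shows "measure M {..<supp_low M} = 0"
proof -
  interpret real_distribution M
    using mixed_strategiesD(1)[OF M] .
  let ?a = "supp_low M"
  have "cdf M t = 0" if "t < ?a" for t
  proof (rule ccontr)
    assume "cdf M t \<noteq> 0"
    then have "0 < cdf M t"
      using cdf_nonneg[of t] by linarith
    then obtain s where "s \<in> supp M" "s \<le> t"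
      using exists_supp_le[OF M] by blast
    then have "?a \<le> t"
      unfolding supp_low_def using bdd_below_supp[OF M] by (meson cInf_lower order_trans)
    with that show False
      by simp
  qed
  then have "\<forall>\<^sub>F t in at_left ?a. cdf M t = 0"
    by (auto simp: eventually_at_left_field intro: exI[of _ "?a - 1"])
  then have "(cdf M \<longlongrightarrow> 0) (at_left ?a)"
    by (rule tendsto_eventually)
  then show ?thesis
    using tendsto_unique[OF _ cdf_at_left] by simp
qed

lemma measure_supp_low_right_pos:
  assumes M: "M \<in> mixed_strategies B" and "0 < e"
  shows "0 < measure M {supp_low M..<supp_low M + e}"
proof -
  interpret real_distribution M
    using mixed_strategiesD(1)[OF M] .
  let ?a = "supp_low M"
  obtain s where s: "s \<in> supp M" "s < ?a + e/2"
    using cInf_lessD[of "supp M" "?a + e/2"] supp_nonempty[OF M] \<open>0 < e\<close>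
    unfolding supp_low_def by force
  have "0 < measure M (ball s (e/2))"
    using s \<open>0 < e\<close> unfolding supp_def by (simp add: emeasure_eq_measure)
  also have "\<dots> \<le> measure M ({..<?a} \<union> {?a..<?a + e})"
    using s by (intro finite_measure_mono) (auto simp: dist_real_def abs_if split: if_splits)
  also have "\<dots> \<le> measure M {..<?a} + measure M {?a..<?a + e}"
    by (rule measure_subadditive) auto
  finally show ?thesis
    using measure_below_supp_low[OF M] by simp
qed

locale best_response =
  fixes Bm vm Bo vo :: real and Mm Mo :: "real measure"
  assumes budget_nonneg: "0 \<le> Bm" and value_pos: "0 < vm"
    and Mm_strategy: "Mm \<in> mixed_strategies Bm" and Mo_strategy: "Mo \<in> mixed_strategies Bo"
    and optimal:
      "\<forall>M\<in>mixed_strategies Bm. exp_util Bm vm Bo vo M Mo \<le> exp_util Bm vm Bo vo Mm Mo"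
begin

sublocale Mm: real_distribution Mm
  by (rule mixed_strategiesD(1)[OF Mm_strategy])

sublocale Mo: real_distribution Mo
  by (rule mixed_strategiesD(1)[OF Mo_strategy])

abbreviation u :: "real \<Rightarrow> real" where
  "u \<equiv> bid_util Bm vm Bo vo Mo"

abbreviation payoff :: real where
  "payoff \<equiv> exp_util Bm vm Bo vo Mm Mo"

lemma bid_util_le_payoff:
  assumes x: "x \<in> {0..Bm}"
  shows "u x \<le> payoff"
proof -
  have R: "return borel x \<in> mixed_strategies Bm"
    by (rule return_in_mixed_strategies[OF x])
  have "u x = (\<integral>y. u y \<partial>return borel x)"
    using bid_util_measurable[OF Mo.real_distribution_axioms] by (simp add: integral_return)
  also have "\<dots> = exp_util Bm vm Bo vo (return borel x) Mo"
    by (rule exp_util_eq_integral_bid_util[OF R Mo_strategy, symmetric])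
  also have "\<dots> \<le> payoff"
    using optimal R by blast
  finally show ?thesis .
qed

lemma payoff_nonneg: "0 \<le> payoff"
proof -
  have "0 \<le> vm * measure Mo {..<0} - 0"
    using value_pos by simp
  also have "\<dots> \<le> u 0"
    using value_pos by (intro measure_lessThan_le_bid_util) (simp_all add: Mo.real_distribution_axioms)
  also have "\<dots> \<le> payoff"
    using budget_nonneg by (intro bid_util_le_payoff) simp
  finally show ?thesis .
qed

lemma exists_optimal_bid_in:
  assumes A: "A \<in> sets borel" and pos: "0 < measure Mm A"
  shows "\<exists>x\<in>A. x \<in> {0..Bm} \<and> u x = payoff"
proof (rule ccontr)
  assume "\<not> ?thesis"
  then have less: "u x < payoff" if "x \<in> A \<inter> {0..Bm}" for x
    using bid_util_le_payoff that by (force simp: order.strict_iff_order)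
  have "measure Mm (A \<inter> {0..Bm}) = measure Mm A"
    using mixed_strategiesD(4)[OF Mm_strategy] A by (intro measure_eq_AE) auto
  then have "emeasure Mm (A \<inter> {0..Bm}) \<noteq> 0"
    using pos by (simp add: Mm.emeasure_eq_measure)
  moreover have "AE x in Mm. u x \<le> payoff"
    using mixed_strategiesD(4)[OF Mm_strategy] by eventually_elim (rule bid_util_le_payoff)
  ultimately have "(\<integral>x. u x \<partial>Mm) < (\<integral>x. payoff \<partial>Mm)"
    using A less integrable_bid_util[OF Mm_strategy Mo_strategy]
    by (intro Mm.integral_less_AE[where A = "A \<inter> {0..Bm}"]) (auto intro!: AE_I2 simp: less_imp_neq)
  then show False
    using exp_util_eq_integral_bid_util[OF Mm_strategy Mo_strategy] Mm.prob_space by simp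
qed

lemma tied_atom_bid_suboptimal:
  assumes c: "0 \<le> c" "c < Bm" and q: "0 < measure Mo {c}"
    and s: "win_prob Bm vm Bo vo c c < 1"
  shows "u c < payoff"
proof -
  let ?s = "win_prob Bm vm Bo vo c c" and ?q = "measure Mo {c}"
  define d where "d = min (Bm - c) (vm * ?q * (1 - ?s) / 2)"
  have "0 < vm * ?q * (1 - ?s)"
    using value_pos q s by simp
  then have d: "0 < d" "d \<le> Bm - c" "d < vm * ?q * (1 - ?s)"
    using c by (auto simp: d_def)
  have "u c = vm * (measure Mo {..<c} + ?s * ?q) - c"
    by (rule bid_util_eq[OF Mo.real_distribution_axioms])
  also have "\<dots> < vm * (measure Mo {..<c} + ?q) - (c + d)"
    using d(3) by (simp add: algebra_simps)
  also have "\<dots> \<le> vm * measure Mo {..<c + d} - (c + d)"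
    using d(1) value_pos
    by (auto simp: Mo.measure_atMost_eq[symmetric] intro!: mult_left_mono Mo.finite_measure_mono)
  also have "\<dots> \<le> u (c + d)"
    using value_pos by (intro measure_lessThan_le_bid_util) (simp_all add: Mo.real_distribution_axioms)
  also have "\<dots> \<le> payoff"
    using c d by (intro bid_util_le_payoff) auto
  finally show ?thesis .
qed

lemma common_atom_tie_won:
  assumes "0 \<le> c" "c < Bm" and "0 < measure Mm {c}" and "0 < measure Mo {c}"
  shows "win_prob Bm vm Bo vo c c = 1"
proof (rule ccontr)
  assume "win_prob Bm vm Bo vo c c \<noteq> 1"
  then have "u c < payoff"
    using assms win_prob_le_1[of Bm vm Bo vo c c] by (intro tied_atom_bid_suboptimal) auto
  moreover have "u c = payoff"
    using exists_optimal_bid_in[of "{c}"] assms(3) by auto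
  ultimately show False
    by simp
qed

text \<open>Without an atom of the opponent at \<open>a = supp_low Mm\<close>, bids just above \<open>a\<close> win with
  probability barely above \<open>Mo {..<a}\<close> but cost at least \<open>a\<close>, and \<open>Mm\<close> puts positive mass on them.\<close>

lemma opponent_atom_at_supp_low:
  assumes pos: "0 < supp_low Mm"
    and gt: "vm * measure Mo {..<supp_low Mm} - supp_low Mm < payoff"
  shows "0 < measure Mo {supp_low Mm}"
proof (rule ccontr)
  let ?a = "supp_low Mm"
  assume "\<not> ?thesis"
  then have "cdf Mo ?a = measure Mo {..<?a}"
    by (simp add: cdf_def2 Mo.measure_atMost_eq not_less measure_le_0_iff)
  moreover have "(cdf Mo \<longlongrightarrow> cdf Mo ?a) (at_right ?a)"
    using Mo.cdf_is_right_cont by (simp add: continuous_within)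
  ultimately have "((\<lambda>x. vm * cdf Mo x - ?a) \<longlongrightarrow> vm * measure Mo {..<?a} - ?a) (at_right ?a)"
    by (auto intro!: tendsto_intros)
  from order_tendstoD(2)[OF this gt]
  obtain b where "?a < b" and b: "\<And>y. ?a < y \<Longrightarrow> y < b \<Longrightarrow> vm * cdf Mo y - ?a < payoff"
    by (auto simp: eventually_at_right_field)
  define e where "e = (b - ?a) / 2"
  have "0 < e"
    using \<open>?a < b\<close> by (simp add: e_def)
  obtain x where x: "x \<in> {?a..<?a + e}" "u x = payoff"
    using exists_optimal_bid_in[OF _ measure_supp_low_right_pos[OF Mm_strategy \<open>0 < e\<close>]] by auto
  have "u x \<le> vm * cdf Mo x - x"
    using value_pos by (intro bid_util_le_cdf) (simp_all add: Mo.real_distribution_axioms)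
  also have "\<dots> \<le> vm * cdf Mo (?a + e) - ?a"
    using x(1) value_pos by (intro diff_mono mult_left_mono Mo.cdf_nondecreasing) auto
  also have "\<dots> < payoff"
    using \<open>?a < b\<close> by (intro b) (simp_all add: e_def field_simps)
  finally show False
    using x(2) by simp
qed

end

lemma nash_eq_best_response:
  assumes "0 \<le> B1" "0 \<le> B2" "0 < v1" "0 < v2" "nash_eq B1 v1 B2 v2 M1 M2"
  shows "best_response B1 v1 B2 v2 M1 M2" and "best_response B2 v2 B1 v1 M2 M1"
  using assms unfolding nash_eq_def best_response_def by auto

lemma supp_low_not_less:
  assumes P1: "best_response B1 v1 B2 v2 M1 M2" and P2: "best_response B2 v2 B1 v1 M2 M1"
    and nondegenerate: "supp_low M2 < supp_up M2"
  shows "\<not> supp_low M1 < supp_low M2"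
proof
  interpret P1: best_response B1 v1 B2 v2 M1 M2
    by (fact P1)
  interpret P2: best_response B2 v2 B1 v1 M2 M1
    by (fact P2)
  let ?a = "supp_low M2"
  assume less: "supp_low M1 < ?a"
  have below: "measure M2 {..<?a} = 0"
    by (rule measure_below_supp_low[OF P2.Mm_strategy])
  have "?a < B2"
    by (rule supp_low_less_budget[OF P2.Mm_strategy nondegenerate])
  have gap: "measure M1 {0<..<?a} = 0"
  proof (rule ccontr)
    assume "measure M1 {0<..<?a} \<noteq> 0"
    then obtain x where x: "x \<in> {0<..<?a}" "P1.u x = P1.payoff"
      using P1.exists_optimal_bid_in[of "{0<..<?a}"] by (auto simp: zero_less_measure_iff)
    have "cdf M2 x \<le> measure M2 {..<?a}"
      using x(1) unfolding cdf_def2 by (intro P1.Mo.finite_measure_mono) auto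
    then have "P1.u x \<le> - x"
      using bid_util_le_cdf[OF P1.Mo.real_distribution_axioms, of v1 B1 B2 v2 x] P1.value_pos below
        P1.Mo.cdf_nonneg[of x] by simp
    then show False
      using x P1.payoff_nonneg by simp
  qed
  have "supp_low M1 = 0"
  proof (rule ccontr)
    let ?a1 = "supp_low M1"
    assume "?a1 \<noteq> 0"
    then have "measure M1 {?a1..<?a1 + (?a - ?a1)} \<le> measure M1 {0<..<?a}"
      using supp_low_nonneg[OF P1.Mm_strategy] by (intro P1.Mm.finite_measure_mono) auto
    then show False
      using gap measure_supp_low_right_pos[OF P1.Mm_strategy, of "?a - ?a1"] less by simp
  qed
  then have "0 < ?a"
    using less by simp
  have "v2 * measure M1 {..<?a} - ?a < P2.payoff"
  proof -
    have "measure M1 {..<?a} \<le> measure M1 ({..<?a/2} \<union> {0<..<?a})"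
      by (intro P1.Mm.finite_measure_mono) auto
    also have "\<dots> \<le> measure M1 {..<?a/2}"
      using gap measure_subadditive[where M = M1 and A = "{..<?a/2}" and B = "{0<..<?a}"] by simp
    finally have "v2 * measure M1 {..<?a} \<le> v2 * measure M1 {..<?a/2}"
      using P2.value_pos by (intro mult_left_mono) auto
    then have "v2 * measure M1 {..<?a} - ?a < v2 * measure M1 {..<?a/2} - ?a/2"
      using \<open>0 < ?a\<close> by linarith
    also have "\<dots> \<le> P2.u (?a/2)"
      using P2.value_pos by (intro measure_lessThan_le_bid_util) (simp_all add: P1.Mm.real_distribution_axioms)
    also have "\<dots> \<le> P2.payoff"
      using \<open>0 < ?a\<close> \<open>?a < B2\<close> by (intro P2.bid_util_le_payoff) auto
    finally show ?thesis .
  qed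
  then have atom1: "0 < measure M1 {?a}"
    using P2.opponent_atom_at_supp_low \<open>0 < ?a\<close> by blast
  then obtain x where "x \<in> {?a}" "P1.u x = P1.payoff"
    using P1.exists_optimal_bid_in[of "{?a}"] by auto
  then have "0 < v1 * (win_prob B1 v1 B2 v2 ?a ?a * measure M2 {?a})"
    using P1.payoff_nonneg \<open>0 < ?a\<close> below bid_util_eq[OF P1.Mo.real_distribution_axioms] by simp
  then have "0 < win_prob B1 v1 B2 v2 ?a ?a * measure M2 {?a}"
    using P1.value_pos zero_less_mult_pos by blast
  then have "0 < win_prob B1 v1 B2 v2 ?a ?a" and atom2: "0 < measure M2 {?a}"
    using win_prob_nonneg[of B1 v1 B2 v2 ?a ?a] measure_nonneg[of M2 "{?a}"]
    by (metis less_eq_real_def mult_zero_left, metis less_eq_real_def mult_zero_right)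
  moreover have "win_prob B2 v2 B1 v1 ?a ?a = 1"
    using \<open>0 < ?a\<close> \<open>?a < B2\<close> atom1 atom2 by (intro P2.common_atom_tie_won) auto
  ultimately show False
    using win_prob_tie_sum[of B1 v1 B2 v2 ?a] by simp
qed

lemma common_supp_low_eq_0:
  assumes P1: "best_response B1 v1 B2 v2 M1 M2" and P2: "best_response B2 v2 B1 v1 M2 M1"
    and nondegenerate: "supp_low M1 < supp_up M1" "supp_low M2 < supp_up M2"
    and common: "supp_low M1 = supp_low M2"
  shows "supp_low M1 = 0"
proof (rule ccontr)
  interpret P1: best_response B1 v1 B2 v2 M1 M2
    by (fact P1)
  interpret P2: best_response B2 v2 B1 v1 M2 M1
    by (fact P2)
  let ?a = "supp_low M1"
  assume "?a \<noteq> 0"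
  then have "0 < ?a"
    using supp_low_nonneg[OF P1.Mm_strategy] by simp
  have "?a < B1" and "?a < B2"
    using supp_low_less_budget[OF P1.Mm_strategy] supp_low_less_budget[OF P2.Mm_strategy]
      nondegenerate common by auto
  have "0 < measure M2 {?a}"
    using P1.opponent_atom_at_supp_low \<open>0 < ?a\<close> P1.payoff_nonneg
      measure_below_supp_low[OF P2.Mm_strategy] common by simp
  moreover have "0 < measure M1 {?a}"
    using P2.opponent_atom_at_supp_low \<open>0 < ?a\<close> P2.payoff_nonneg
      measure_below_supp_low[OF P1.Mm_strategy] common by simp
  ultimately have "win_prob B1 v1 B2 v2 ?a ?a = 1" and "win_prob B2 v2 B1 v1 ?a ?a = 1"
    using \<open>0 < ?a\<close> \<open>?a < B1\<close> \<open>?a < B2\<close>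
    by (simp_all add: P1.common_atom_tie_won P2.common_atom_tie_won)
  then show False
    using win_prob_tie_sum[of B1 v1 B2 v2 ?a] by simp
qed

theorem lemma4:
  fixes B1 B2 v1 v2 :: real and M1 M2 :: "real measure"
  assumes "B1 \<ge> 0" and "B2 \<ge> 0" and "v1 > 0" and "v2 > 0"
    and "nash_eq B1 v1 B2 v2 M1 M2"
    and "supp_low M1 < supp_up M1" and "supp_low M2 < supp_up M2"
  shows "supp_low M1 = 0 \<and> supp_low M2 = 0"
proof -
  note P1 = nash_eq_best_response(1)[OF assms(1-5)]
  note P2 = nash_eq_best_response(2)[OF assms(1-5)]
  have "supp_low M1 = supp_low M2"
    using supp_low_not_less[OF P1 P2 assms(7)] supp_low_not_less[OF P2 P1 assms(6)] by linarith
  then show ?thesis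
    using common_supp_low_eq_0[OF P1 P2 assms(6,7)] by simp
qed

end
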